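(* Every simple Yetter-Drinfeld module $V$ over $H=B(n,w,\gamma)$ is finite-dimensional.
   Context: $\Bbbk$ is an algebraically closed field of characteristic $0$; $n,w$ are positive integers and $\gamma\in\Bbbk$ is a primitive $n$-th root of unity. $H=B(n,w,\gamma)$ is the Hopf algebra generated by $x^{\pm1},g,y$ with relations $xx^{-1}=x^{-1}x=1$, $xg=gx$, $xy=yx$, $yg=\gamma gy$, $y^n=1-x^w=1-g^n$, with $\Delta(x)=x\otimes x$, $\Delta(g)=g\otimes g$, $\Delta(y)=y\otimes g+1\otimes y$, $\varepsilon(x)=\varepsilon(g)=1$, $\varepsilon(y)=0$, $S(x)=x^{-1}$, $S(g)=g^{-1}$, $S(y)=-yg^{-1}$. A (left-left) Yetter-Drinfeld module over $H$ is a left $H$-module and left $H$-comodule $(V,\cdot,\delta)$, $\delta(v)=v_{(-1)}\otimes v_{(0)}$, such that $\delta(h\cdot v)=h_{(1)}v_{(-1)}S(h_{(3)})\otimes h_{(2)}\cdot v_{(0)}$ for all $h\in H$, $v\in V$; simple means no nonzero proper Yetter-Drinfeld submodules. *)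

theory Defs
  imports "HOL-Library.Poly_Mapping" "HOL-Computational_Algebra.Polynomial"
begin

text \<open>
  Basis (PBW): x^a g^b y^c with a an integer, 0 <= b < n, 0 <= c < n; the basis element
  x^a g^b y^c is indexed by the triple (a,b,c).  Elements of H are finitely supported
  coefficient functions on such triples (type Bidx =>0 'k); elements of H (x) H are
  finitely supported functions on pairs of triples.  All structure maps are derived
  from the defining relations: x central, y g = gamma g y, g^n = x^w, y^n = 1 - x^w.
\<close>

type_synonym Bidx = "int \<times> nat \<times> nat"

definition valid :: "nat \<Rightarrow> Bidx set" where
  "valid n = {(a, b, c). b < n \<and> c < n}"

definition Hset :: "nat \<Rightarrow> (Bidx \<Rightarrow>\<^sub>0 'k::field) set" where
  "Hset n = {h. Poly_Mapping.keys h \<subseteq> valid n}"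

definition cmul :: "'k::field \<Rightarrow> ('a \<Rightarrow>\<^sub>0 'k) \<Rightarrow> ('a \<Rightarrow>\<^sub>0 'k)" where
  "cmul c p = Poly_Mapping.map (\<lambda>z. c * z) p"

text \<open>Normal form of x^a g^b y^c for arbitrary b, c, using g^n = x^w and y^n = 1 - x^w.\<close>
definition mon :: "nat \<Rightarrow> nat \<Rightarrow> int \<Rightarrow> nat \<Rightarrow> nat \<Rightarrow> (Bidx \<Rightarrow>\<^sub>0 'k::field)" where
  "mon n w a b c =
     (\<Sum>i\<le>c div n. Poly_Mapping.single
        (a + int w * int (b div n) + int w * int i, b mod n, c mod n)
        ((-1) ^ i * of_nat (c div n choose i)))"

definition oneH :: "(Bidx \<Rightarrow>\<^sub>0 'k::field)" where
  "oneH = Poly_Mapping.single (0, 0, 0) 1"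

definition bprod :: "nat \<Rightarrow> nat \<Rightarrow> 'k::field \<Rightarrow> Bidx \<Rightarrow> Bidx \<Rightarrow> (Bidx \<Rightarrow>\<^sub>0 'k)" where
  "bprod n w \<gamma> u v = (case u of (a, b, c) \<Rightarrow> case v of (a', b', c') \<Rightarrow>
       cmul (\<gamma> ^ (c * b')) (mon n w (a + a') (b + b') (c + c')))"

definition lin2 :: "('a \<Rightarrow> 'b \<Rightarrow> ('c \<Rightarrow>\<^sub>0 'k::field)) \<Rightarrow> ('a \<Rightarrow>\<^sub>0 'k) \<Rightarrow> ('b \<Rightarrow>\<^sub>0 'k) \<Rightarrow> ('c \<Rightarrow>\<^sub>0 'k)" where
  "lin2 f p q = (\<Sum>u\<in>Poly_Mapping.keys p. \<Sum>v\<in>Poly_Mapping.keys q. cmul (Poly_Mapping.lookup p u * Poly_Mapping.lookup q v) (f u v))"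

definition hmul :: "nat \<Rightarrow> nat \<Rightarrow> 'k::field \<Rightarrow> (Bidx \<Rightarrow>\<^sub>0 'k) \<Rightarrow> (Bidx \<Rightarrow>\<^sub>0 'k) \<Rightarrow> (Bidx \<Rightarrow>\<^sub>0 'k)" where
  "hmul n w \<gamma> = lin2 (bprod n w \<gamma>)"

definition tens :: "('a \<Rightarrow>\<^sub>0 'k::field) \<Rightarrow> ('b \<Rightarrow>\<^sub>0 'k) \<Rightarrow> ('a \<times> 'b \<Rightarrow>\<^sub>0 'k)" where
  "tens p q = (\<Sum>u\<in>Poly_Mapping.keys p. \<Sum>v\<in>Poly_Mapping.keys q. Poly_Mapping.single (u, v) (Poly_Mapping.lookup p u * Poly_Mapping.lookup q v))"

definition tmul :: "nat \<Rightarrow> nat \<Rightarrow> 'k::field \<Rightarrow> (Bidx \<times> Bidx \<Rightarrow>\<^sub>0 'k) \<Rightarrow> (Bidx \<times> Bidx \<Rightarrow>\<^sub>0 'k) \<Rightarrow> (Bidx \<times> Bidx \<Rightarrow>\<^sub>0 'k)" where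
  "tmul n w \<gamma> = lin2 (\<lambda>(u1, u2) (v1, v2). tens (bprod n w \<gamma> u1 v1) (bprod n w \<gamma> u2 v2))"

definition genx :: "nat \<Rightarrow> nat \<Rightarrow> (Bidx \<Rightarrow>\<^sub>0 'k::field)" where "genx n w = mon n w 1 0 0"
definition geng :: "nat \<Rightarrow> nat \<Rightarrow> (Bidx \<Rightarrow>\<^sub>0 'k::field)" where "geng n w = mon n w 0 1 0"
definition geny :: "nat \<Rightarrow> nat \<Rightarrow> (Bidx \<Rightarrow>\<^sub>0 'k::field)" where "geny n w = mon n w 0 0 1"

definition Delta :: "nat \<Rightarrow> nat \<Rightarrow> 'k::field \<Rightarrow> Bidx \<Rightarrow> (Bidx \<times> Bidx \<Rightarrow>\<^sub>0 'k)" where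
  "Delta n w \<gamma> u = (case u of (a, b, c) \<Rightarrow>
     tmul n w \<gamma> (tens (mon n w a b 0) (mon n w a b 0))
       ((tmul n w \<gamma> (tens (geny n w) (geng n w) + tens oneH (geny n w)) ^^ c) (tens oneH oneH)))"

definition DeltaH :: "nat \<Rightarrow> nat \<Rightarrow> 'k::field \<Rightarrow> (Bidx \<Rightarrow>\<^sub>0 'k) \<Rightarrow> (Bidx \<times> Bidx \<Rightarrow>\<^sub>0 'k)" where
  "DeltaH n w \<gamma> h = (\<Sum>u\<in>Poly_Mapping.keys h. cmul (Poly_Mapping.lookup h u) (Delta n w \<gamma> u))"

definition eps :: "Bidx \<Rightarrow> 'k::field" where
  "eps u = (case u of (a, b, c) \<Rightarrow> if c = 0 then 1 else 0)"

text \<open>Antipode on basis elements: S(x^a g^b y^c) = S(y)^c S(g)^b S(x)^a, with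
  S(g) = g^(-1) = x^(-w) g^(n-1), S(y) = - y g^(-1), S(x)^a = x^(-a).\<close>
definition antipode :: "nat \<Rightarrow> nat \<Rightarrow> 'k::field \<Rightarrow> Bidx \<Rightarrow> (Bidx \<Rightarrow>\<^sub>0 'k)" where
  "antipode n w \<gamma> u = (case u of (a, b, c) \<Rightarrow>
     (let Sg = mon n w (- int w) (n - 1) 0;
          Sy = cmul (-1) (hmul n w \<gamma> (geny n w) Sg)
      in hmul n w \<gamma> (hmul n w \<gamma> ((hmul n w \<gamma> Sy ^^ c) oneH) ((hmul n w \<gamma> Sg ^^ b) oneH))
           (mon n w (- a) 0 0)))"

text \<open>A left H-comodule structure is given by coact: delta(v) = sum over u of u (x) coact v u.\<close>
definition act :: "('k::field \<Rightarrow> 'v::ab_group_add \<Rightarrow> 'v) \<Rightarrow> (Bidx \<Rightarrow> 'v \<Rightarrow> 'v) \<Rightarrow> (Bidx \<Rightarrow>\<^sub>0 'k) \<Rightarrow> 'v \<Rightarrow> 'v" where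
  "act scale actb h v = (\<Sum>u\<in>Poly_Mapping.keys h. scale (Poly_Mapping.lookup h u) (actb u v))"

definition csupp :: "('v::ab_group_add \<Rightarrow> Bidx \<Rightarrow> 'v) \<Rightarrow> 'v \<Rightarrow> Bidx set" where
  "csupp coact v = {u. coact v u \<noteq> 0}"

definition YD_module ::
  "nat \<Rightarrow> nat \<Rightarrow> 'k::field \<Rightarrow> ('k \<Rightarrow> 'v::ab_group_add \<Rightarrow> 'v) \<Rightarrow> (Bidx \<Rightarrow> 'v \<Rightarrow> 'v) \<Rightarrow> ('v \<Rightarrow> Bidx \<Rightarrow> 'v) \<Rightarrow> bool" where
  "YD_module n w \<gamma> scale actb coact \<longleftrightarrow>
     vector_space scale
     \<comment> \<open>left H-module\<close>
     \<and> (\<forall>u\<in>valid n. Vector_Spaces.linear scale scale (actb u))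
     \<and> (\<forall>v. act scale actb oneH v = v)
     \<and> (\<forall>h\<in>Hset n. \<forall>h'\<in>Hset n. \<forall>v.
           act scale actb (hmul n w \<gamma> h h') v = act scale actb h (act scale actb h' v))
     \<comment> \<open>left H-comodule\<close>
     \<and> (\<forall>v. finite (csupp coact v) \<and> csupp coact v \<subseteq> valid n)
     \<and> (\<forall>u. Vector_Spaces.linear scale scale (\<lambda>v. coact v u))
     \<and> (\<forall>v. (\<Sum>u\<in>csupp coact v. scale (eps u) (coact v u)) = v)
     \<and> (\<forall>v u1 u2. (\<Sum>u\<in>csupp coact v. scale (Poly_Mapping.lookup (Delta n w \<gamma> u) (u1, u2)) (coact v u))
                   = coact (coact v u1) u2)
     \<comment> \<open>Yetter-Drinfeld compatibility: delta(h.v) = h1 v(-1) S(h3) (x) h2.v(0)\<close>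
     \<and> (\<forall>h\<in>Hset n. \<forall>v s.
          coact (act scale actb h v) s =
          (\<Sum>(p, q)\<in>Poly_Mapping.keys (DeltaH n w \<gamma> h). \<Sum>(p1, p2)\<in>Poly_Mapping.keys (Delta n w \<gamma> p). \<Sum>t\<in>csupp coact v.
              scale (Poly_Mapping.lookup (DeltaH n w \<gamma> h) (p, q) * Poly_Mapping.lookup (Delta n w \<gamma> p) (p1, p2)
                     * Poly_Mapping.lookup (hmul n w \<gamma> (hmul n w \<gamma> (Poly_Mapping.single p1 1) (Poly_Mapping.single t 1))
                                 (antipode n w \<gamma> q)) s)
                    (actb p2 (coact v t))))"

definition YD_submodule ::
  "nat \<Rightarrow> ('k::field \<Rightarrow> 'v::ab_group_add \<Rightarrow> 'v) \<Rightarrow> (Bidx \<Rightarrow> 'v \<Rightarrow> 'v) \<Rightarrow> ('v \<Rightarrow> Bidx \<Rightarrow> 'v) \<Rightarrow> 'v set \<Rightarrow> bool" where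
  "YD_submodule n scale actb coact W \<longleftrightarrow>
     module.subspace scale W
     \<and> (\<forall>u\<in>valid n. \<forall>x\<in>W. actb u x \<in> W)
     \<and> (\<forall>x\<in>W. \<forall>u. coact x u \<in> W)"

definition simple_YD ::
  "nat \<Rightarrow> nat \<Rightarrow> 'k::field \<Rightarrow> ('k \<Rightarrow> 'v::ab_group_add \<Rightarrow> 'v) \<Rightarrow> (Bidx \<Rightarrow> 'v \<Rightarrow> 'v) \<Rightarrow> ('v \<Rightarrow> Bidx \<Rightarrow> 'v) \<Rightarrow> bool" where
  "simple_YD n w \<gamma> scale actb coact \<longleftrightarrow>
     YD_module n w \<gamma> scale actb coact
     \<and> (UNIV :: 'v set) \<noteq> {0}
     \<and> (\<forall>W. YD_submodule n scale actb coact W \<longrightarrow> W = {0} \<or> W = UNIV)"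

definition alg_closed :: "'k::field itself \<Rightarrow> bool" where
  "alg_closed _ \<longleftrightarrow> (\<forall>p :: 'k poly. 0 < degree p \<longrightarrow> (\<exists>z. poly p z = 0))"

end

theory Submission
  imports Defs
begin

text \<open>
  The central group-like element x acts on a Yetter-Drinfeld module V by an operator E commuting
  with the action and the coaction, so V is a module over k[E, E^-1] and every E - c is a
  Yetter-Drinfeld endomorphism. A simple V is generated by any v \<noteq> 0, i.e. spanned by H acting on
  the finitely many coefficients of the coaction of v; since H is spanned by the x^a g^b y^c with
  b, c < n, V is a finitely generated k[E, E^-1]-module. If E is a scalar, V is therefore
  finite-dimensional. Otherwise simplicity makes every E - c surjective, and over an algebraically
  closed field such a finitely generated module vanishes: for a generator f, the polynomials p with
  p(E) f in the span of the orbits of the other generators form an ideal which, for every c \<noteq> 0,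
  contains a polynomial not vanishing at c (this is where surjectivity of E - c enters), and which
  is saturated with respect to X since E is invertible; so its generator has no root and is a unit.
\<close>

section \<open>Polynomials in an invertible operator\<close>

lemma poly_ideal_contains_one:
  fixes J :: "'a::field poly set"
  assumes alg_closed: "alg_closed TYPE('a)"
    and diff: "\<And>p q. p \<in> J \<Longrightarrow> q \<in> J \<Longrightarrow> p - q \<in> J"
    and mult: "\<And>p q. p \<in> J \<Longrightarrow> q * p \<in> J"
    and cancel_X: "\<And>p. pCons 0 p \<in> J \<Longrightarrow> p \<in> J"
    and nonvanishing: "\<And>c. c \<noteq> 0 \<Longrightarrow> \<exists>r\<in>J. poly r c \<noteq> 0"
  shows "1 \<in> J"
proof -
  obtain r1 where "r1 \<in> J" "poly r1 1 \<noteq> 0" using nonvanishing[of 1] by auto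
  then have "r1 \<in> J \<and> r1 \<noteq> 0" by auto
  then obtain p where pJ: "p \<in> J" and p0: "p \<noteq> 0"
    and minimal: "\<And>q. q \<in> J \<Longrightarrow> q \<noteq> 0 \<Longrightarrow> degree p \<le> degree q"
    using ex_has_least_nat[of "\<lambda>p. p \<in> J \<and> p \<noteq> 0" r1 degree] by blast
  have "degree p = 0"
  proof (rule ccontr)
    assume "degree p \<noteq> 0"
    then obtain z where pz: "poly p z = 0" using alg_closed unfolding alg_closed_def by blast
    then obtain q where pq: "p = [:-z, 1:] * q" by (metis dvdE poly_eq_0_iff_dvd)
    with p0 have q0: "q \<noteq> 0" by auto
    have "degree p = degree [:-z, 1:] + degree q" unfolding pq using q0 by (intro degree_mult_eq) auto
    then have deg_q: "degree q < degree p" by simp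
    show False
    proof (cases "z = 0")
      case True
      then have "q \<in> J" using pJ pq cancel_X by simp
      then show False using minimal[of q] q0 deg_q by simp
    next
      case False
      obtain r where rJ: "r \<in> J" and rz: "poly r z \<noteq> 0" using nonvanishing[OF False] by blast
      have "r mod p = r - (r div p) * p" by (simp add: minus_div_mult_eq_mod)
      then have "r mod p \<in> J" using diff[OF rJ mult[OF pJ]] by simp
      then have "r mod p = 0" using minimal degree_mod_less'[OF p0] by (meson leD)
      then have "poly r z = 0" using pz by (metis dvd_eq_mod_eq_0 poly_eq_0_iff_dvd dvd_trans)
      then show False using rz by simp
    qed
  qed
  then obtain c where pc: "p = [:c:]" and c0: "c \<noteq> 0" using p0 by (metis degree_0_id pCons_0_0)
  have "[:inverse c:] * p \<in> J" by (rule mult[OF pJ])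
  then show ?thesis using c0 by (simp add: pc one_pCons)
qed

locale int_action = vector_space scale
  for scale :: "'a::field \<Rightarrow> 'b::ab_group_add \<Rightarrow> 'b" (infixr \<open>*s\<close> 75) +
  fixes E :: "int \<Rightarrow> 'b \<Rightarrow> 'b"
  assumes linear_E: "Vector_Spaces.linear scale scale (E a)"
    and E_0: "E 0 v = v"
    and E_add: "E (a + b) v = E a (E b v)"
begin

sublocale vector_space_pair scale scale ..

lemma E_zero [simp]: "E a 0 = 0"
  by (rule linear_0[OF linear_E])

lemma E_commute: "E a (E b v) = E b (E a v)"
  by (metis E_add add.commute)

definition poly_act :: "'a poly \<Rightarrow> 'b \<Rightarrow> 'b" where
  "poly_act q v = (\<Sum>i\<le>degree q. coeff q i *s E (int i) v)"

definition orbit_span :: "'b set \<Rightarrow> 'b set" where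
  "orbit_span F = span {E a f | a f. f \<in> F}"

text \<open>
  For an E-stable subspace U, cyclic_modulo U f = UNIV says that f generates V/U as a module
  over k[E, E^-1].
\<close>
definition cyclic_modulo :: "'b set \<Rightarrow> 'b \<Rightarrow> 'b set" where
  "cyclic_modulo U f = {u. \<exists>N::nat. \<exists>q. E (int N) u - poly_act q f \<in> U}"

definition shifts_surjective :: bool where
  "shifts_surjective \<longleftrightarrow> (\<forall>c. surj (\<lambda>u. E 1 u - c *s u))"

lemma poly_act_bound:
  assumes "degree q \<le> N"
  shows "poly_act q v = (\<Sum>i\<le>N. coeff q i *s E (int i) v)"
  unfolding poly_act_def using assms
  by (intro sum.mono_neutral_left) (auto simp: coeff_eq_0)

lemma poly_act_add: "poly_act (p + q) v = poly_act p v + poly_act q v"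
proof -
  let ?N = "max (degree p) (degree q)"
  have "degree (p + q) \<le> ?N" by (rule degree_add_le_max)
  then show ?thesis
    by (simp add: poly_act_bound[of _ ?N] scale_left_distrib sum.distrib)
qed

lemma poly_act_diff: "poly_act (p - q) v = poly_act p v - poly_act q v"
proof -
  let ?N = "max (degree p) (degree q)"
  have "degree (p - q) \<le> ?N" by (rule degree_diff_le_max)
  then show ?thesis
    by (simp add: poly_act_bound[of _ ?N] scale_left_diff_distrib sum_subtractf)
qed

lemma poly_act_smult: "poly_act (smult c p) v = c *s poly_act p v"
  using poly_act_bound[of "smult c p" "degree p"]
  by (simp add: poly_act_def scale_sum_right)

lemma poly_act_pCons: "poly_act (pCons a p) v = a *s v + E 1 (poly_act p v)"
proof -
  have "poly_act (pCons a p) v = (\<Sum>i\<le>Suc (degree p). coeff (pCons a p) i *s E (int i) v)"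
    by (rule poly_act_bound) (rule degree_pCons_le)
  also have "\<dots> = a *s v + (\<Sum>i\<le>degree p. coeff p i *s E 1 (E (int i) v))"
    by (subst sum.atMost_Suc_shift) (simp add: E_0 E_add[symmetric] add.commute)
  also have "\<dots> = a *s v + E 1 (poly_act p v)"
    by (simp add: poly_act_def linear_sum[OF linear_E] linear_scale[OF linear_E])
  finally show ?thesis .
qed

lemma poly_act_0 [simp]: "poly_act 0 v = 0"
  by (simp add: poly_act_def)

lemma poly_act_const [simp]: "poly_act [:c:] v = c *s v"
  using poly_act_pCons[of c 0 v] by simp

lemma poly_act_mult: "poly_act (p * q) v = poly_act p (poly_act q v)"
  by (induction p) (simp_all add: poly_act_add poly_act_smult poly_act_pCons)

lemma poly_act_monom: "poly_act (monom 1 m) v = E (int m) v"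
proof (induction m arbitrary: v)
  case (Suc m)
  then show ?case
    using E_add[of 1 "int m"] by (simp add: monom_Suc poly_act_pCons add.commute)
qed (simp add: monom_0 E_0)

lemma poly_act_linear_factor: "poly_act [:-c, 1:] v = E 1 v - c *s v"
  by (simp add: poly_act_pCons)

lemma poly_act_diff_right: "poly_act q (x - y) = poly_act q x - poly_act q y"
  by (simp add: poly_act_def linear_diff[OF linear_E] scale_right_diff_distrib sum_subtractf)

lemma poly_act_mem_subspace:
  assumes "subspace U" "\<And>a x. x \<in> U \<Longrightarrow> E a x \<in> U" "x \<in> U"
  shows "poly_act q x \<in> U"
  unfolding poly_act_def using assms by (intro subspace_sum subspace_scale) auto

lemma subspace_cyclic_modulo:
  assumes U: "subspace U" and U_stable: "\<And>a x. x \<in> U \<Longrightarrow> E a x \<in> U"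
  shows "subspace (cyclic_modulo U f)"
  unfolding subspace_def
proof (intro conjI ballI allI)
  show "0 \<in> cyclic_modulo U f"
    unfolding cyclic_modulo_def by (intro CollectI exI[of _ 0]) (simp add: subspace_0[OF U])
next
  fix x y assume "x \<in> cyclic_modulo U f" "y \<in> cyclic_modulo U f"
  then obtain N1 q1 N2 q2 where
    x: "E (int N1) x - poly_act q1 f \<in> U" and y: "E (int N2) y - poly_act q2 f \<in> U"
    unfolding cyclic_modulo_def by blast
  have shift: "E (int (N1 + N2)) v = E (int N2) (E (int N1) v)"
    "E (int (N1 + N2)) v = E (int N1) (E (int N2) v)" for v
    by (metis E_add add.commute of_nat_add)+
  have "E (int (N1 + N2)) (x + y) - poly_act (monom 1 N2 * q1 + monom 1 N1 * q2) f
      = E (int N2) (E (int N1) x - poly_act q1 f) + E (int N1) (E (int N2) y - poly_act q2 f)"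
    by (simp only: linear_add[OF linear_E] linear_diff[OF linear_E] shift(1)[of x] shift(2)[of y]
        poly_act_add poly_act_mult poly_act_monom) (simp add: algebra_simps)
  also have "\<dots> \<in> U"
    using x y by (intro subspace_add[OF U] U_stable)
  finally show "x + y \<in> cyclic_modulo U f" unfolding cyclic_modulo_def by blast
next
  fix c x assume "x \<in> cyclic_modulo U f"
  then obtain N q where x: "E (int N) x - poly_act q f \<in> U"
    unfolding cyclic_modulo_def by blast
  have "E (int N) (c *s x) - poly_act (smult c q) f = c *s (E (int N) x - poly_act q f)"
    by (simp add: linear_scale[OF linear_E] poly_act_smult scale_right_diff_distrib)
  also have "\<dots> \<in> U" using x by (rule subspace_scale[OF U])
  finally show "c *s x \<in> cyclic_modulo U f" unfolding cyclic_modulo_def by blast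
qed

lemma subspace_subset_cyclic_modulo:
  assumes "subspace U"
  shows "U \<subseteq> cyclic_modulo U f"
proof
  fix u assume "u \<in> U"
  then have "E (int 0) u - poly_act 0 f \<in> U" by (simp add: E_0)
  then show "u \<in> cyclic_modulo U f" unfolding cyclic_modulo_def by blast
qed

lemma orbit_mem_cyclic_modulo:
  assumes "subspace U"
  shows "E a f \<in> cyclic_modulo U f"
proof (cases "a \<ge> 0")
  case True
  then have "E (int 0) (E a f) - poly_act (monom 1 (nat a)) f \<in> U"
    by (simp add: E_0 poly_act_monom subspace_0[OF assms])
  then show ?thesis unfolding cyclic_modulo_def by blast
next
  case False
  then have "E (int (nat (-a))) (E a f) - poly_act 1 f \<in> U"
    by (simp add: E_0 E_add[symmetric] one_pCons subspace_0[OF assms])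
  then show ?thesis unfolding cyclic_modulo_def by blast
qed

lemma cyclic_modulo_nonvanishing:
  assumes U: "subspace U" and U_stable: "\<And>a x. x \<in> U \<Longrightarrow> E a x \<in> U"
    and cyclic: "cyclic_modulo U f = UNIV"
    and surj: "surj (\<lambda>u. E 1 u - c *s u)" and c0: "c \<noteq> 0"
  shows "\<exists>r. poly_act r f \<in> U \<and> poly r c \<noteq> 0"
proof -
  obtain u where fu: "f = E 1 u - c *s u" using surjD[OF surj] by blast
  obtain N q where Nq: "E (int N) u - poly_act q f \<in> U"
    using cyclic unfolding cyclic_modulo_def by blast
  define r where "r = monom 1 N - [:-c, 1:] * q"
  have "E (int N) f = E 1 (E (int N) u) - c *s E (int N) u"
    unfolding fu linear_diff[OF linear_E] linear_scale[OF linear_E] E_commute[of "int N"] ..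
  then have shift_f: "E (int N) f = poly_act [:-c, 1:] (E (int N) u)"
    by (simp only: poly_act_linear_factor)
  have "poly_act r f = poly_act [:-c, 1:] (E (int N) u - poly_act q f)"
    unfolding r_def poly_act_diff poly_act_monom poly_act_mult poly_act_diff_right
    by (simp only: shift_f)
  also have "\<dots> \<in> U"
    by (rule poly_act_mem_subspace[OF U U_stable Nq])
  finally have "poly_act r f \<in> U" .
  moreover have "poly r c \<noteq> 0"
    using c0 by (simp add: r_def poly_monom)
  ultimately show ?thesis by blast
qed

lemma cyclic_modulo_generator_mem:
  assumes alg_closed: "alg_closed TYPE('a)"
    and U: "subspace U" and U_stable: "\<And>a x. x \<in> U \<Longrightarrow> E a x \<in> U"
    and cyclic: "cyclic_modulo U f = UNIV"
    and surj: shifts_surjective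
  shows "f \<in> U"
proof -
  let ?J = "{p. poly_act p f \<in> U}"
  have "1 \<in> ?J"
  proof (rule poly_ideal_contains_one[OF alg_closed])
    show "p - q \<in> ?J" if "p \<in> ?J" "q \<in> ?J" for p q
      using that by (simp add: poly_act_diff subspace_diff[OF U])
    show "q * p \<in> ?J" if "p \<in> ?J" for p q
      using that by (simp add: poly_act_mult poly_act_mem_subspace[OF U U_stable])
    show "p \<in> ?J" if "pCons 0 p \<in> ?J" for p
    proof -
      have "E (-1) (E 1 (poly_act p f)) \<in> U"
        using that U_stable by (simp add: poly_act_pCons)
      then show ?thesis by (simp add: E_add[symmetric] E_0)
    qed
    show "\<exists>r\<in>?J. poly r c \<noteq> 0" if "c \<noteq> 0" for c
      using cyclic_modulo_nonvanishing[OF U U_stable cyclic _ that] surj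
      unfolding shifts_surjective_def by blast
  qed
  then show ?thesis by (simp add: one_pCons)
qed

lemma subspace_orbit_span: "subspace (orbit_span F)"
  unfolding orbit_span_def by simp

lemma orbit_span_E_mem:
  assumes "x \<in> orbit_span F"
  shows "E a x \<in> orbit_span F"
proof -
  have "E a ` orbit_span F = span (E a ` {E b f | b f. f \<in> F})"
    unfolding orbit_span_def by (rule linear_span_image[OF linear_E, symmetric])
  also have "\<dots> \<subseteq> orbit_span F"
    unfolding orbit_span_def by (rule span_mono) (fastforce simp: E_add[symmetric])
  finally show ?thesis using assms by blast
qed

lemma orbit_span_insert_mem:
  assumes "f \<in> orbit_span F"
  shows "orbit_span (insert f F) = orbit_span F"
proof
  have "E a g \<in> orbit_span F" if "g \<in> insert f F" for a g
    using that
  proof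
    assume "g = f"
    then show ?thesis using orbit_span_E_mem[OF assms] by simp
  next
    assume "g \<in> F"
    then show ?thesis unfolding orbit_span_def by (intro span_base) blast
  qed
  then have "{E a g | a g. g \<in> insert f F} \<subseteq> orbit_span F" by blast
  then show "orbit_span (insert f F) \<subseteq> orbit_span F"
    unfolding orbit_span_def[of "insert f F"] by (rule span_minimal[OF _ subspace_orbit_span])
  show "orbit_span F \<subseteq> orbit_span (insert f F)"
    unfolding orbit_span_def by (rule span_mono) blast
qed

lemma orbit_span_insert_subset_cyclic_modulo:
  "orbit_span (insert f F) \<subseteq> cyclic_modulo (orbit_span F) f"
proof -
  have "E a g \<in> cyclic_modulo (orbit_span F) f" if "g \<in> insert f F" for a g
    using that
  proof
    assume "g = f"
    then show ?thesis using orbit_mem_cyclic_modulo[OF subspace_orbit_span] by simp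
  next
    assume "g \<in> F"
    then have "E a g \<in> orbit_span F" unfolding orbit_span_def by (intro span_base) blast
    then show ?thesis using subspace_subset_cyclic_modulo[OF subspace_orbit_span] by blast
  qed
  then have "{E a g | a g. g \<in> insert f F} \<subseteq> cyclic_modulo (orbit_span F) f" by blast
  then show ?thesis unfolding orbit_span_def[of "insert f F"]
    by (rule span_minimal[OF _ subspace_cyclic_modulo[OF subspace_orbit_span orbit_span_E_mem]])
qed

lemma E_mem_span_if_scalar:
  assumes scalar: "\<And>v. E 1 v = c *s v"
  shows "E a v \<in> span {v}"
proof (cases "c = 0")
  case True
  have "E a v = E 1 (E (-1) (E a v))" by (simp add: E_add[symmetric] E_0)
  then show ?thesis using True scalar by (simp add: span_zero)
next
  case False
  have E_minus: "E (-1) x = inverse c *s x" for x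
  proof -
    have "x = c *s E (-1) x" using scalar[of "E (-1) x"] by (simp add: E_add[symmetric] E_0)
    then have "inverse c *s x = inverse c *s (c *s E (-1) x)" by simp
    then show ?thesis using False by simp
  qed
  show ?thesis
  proof (induction a rule: int_induct[where k = 0])
    case base
    then show ?case by (simp add: E_0 span_base)
  next
    case (step1 i)
    then show ?case using E_add[of 1 i v] scalar by (simp add: add.commute span_scale)
  next
    case (step2 i)
    then show ?case using E_add[of "-1" i v] E_minus by (simp add: span_scale)
  qed
qed

lemma orbit_span_subset_span_if_scalar:
  assumes "\<And>v. E 1 v = c *s v"
  shows "orbit_span F \<subseteq> span F"
proof -
  have "E a f \<in> span F" if "f \<in> F" for a f
    using E_mem_span_if_scalar[OF assms] span_mono[of "{f}" F] that by blast
  then show ?thesis unfolding orbit_span_def by (intro span_minimal) auto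
qed

lemma finitely_generated_shifts_surjective_trivial:
  assumes alg_closed: "alg_closed TYPE('a)" and "finite F"
    and "orbit_span F = UNIV" and surj: shifts_surjective
  shows "(UNIV :: 'b set) = {0}"
  using \<open>finite F\<close> \<open>orbit_span F = UNIV\<close>
proof (induction F rule: finite_induct)
  case empty
  then show ?case by (simp add: orbit_span_def)
next
  case (insert f F)
  have "cyclic_modulo (orbit_span F) f = UNIV"
    using orbit_span_insert_subset_cyclic_modulo insert.prems by blast
  then have "f \<in> orbit_span F"
    using cyclic_modulo_generator_mem[OF alg_closed subspace_orbit_span orbit_span_E_mem _ surj] by blast
  then show ?case using insert.IH insert.prems by (simp add: orbit_span_insert_mem)
qed

end

section \<open>Basis elements of B(n, w, \<gamma>)\<close>

lemma lookup_cmul: "Poly_Mapping.lookup (cmul c p) k = c * Poly_Mapping.lookup p k"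
  unfolding cmul_def by transfer (simp add: when_def)

lemma keys_cmul: "Poly_Mapping.keys (cmul c p) \<subseteq> Poly_Mapping.keys p"
  by (auto simp: in_keys_iff lookup_cmul)

lemma cmul_one [simp]: "cmul 1 p = p"
  by (rule poly_mapping_eqI) (simp add: lookup_cmul)

lemma keys_sum_subset:
  assumes "\<And>i. i \<in> I \<Longrightarrow> Poly_Mapping.keys (b i) \<subseteq> K"
  shows "Poly_Mapping.keys (sum b I) \<subseteq> K"
  using keys_sum[of b I] assms by blast

lemma keys_lin2: "Poly_Mapping.keys (lin2 f p q) \<subseteq> (\<Union>u v. Poly_Mapping.keys (f u v))"
  unfolding lin2_def by (intro keys_sum_subset order_trans[OF keys_cmul]) blast

lemma lin2_single [simp]: "lin2 f (Poly_Mapping.single u 1) (Poly_Mapping.single v 1) = f u v"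
  by (simp add: lin2_def)

lemma keys_tens: "Poly_Mapping.keys (tens p q) \<subseteq> Poly_Mapping.keys p \<times> Poly_Mapping.keys q"
  unfolding tens_def by (intro keys_sum_subset) simp

lemma tens_single [simp]:
  "tens (Poly_Mapping.single u (1::'k::field)) (Poly_Mapping.single v 1) = Poly_Mapping.single (u, v) 1"
  by (simp add: tens_def)

lemma mon_single: "b < n \<Longrightarrow> c < n \<Longrightarrow> mon n w a b c = Poly_Mapping.single (a, b, c) 1"
  by (simp add: mon_def)

lemma keys_mon: "0 < n \<Longrightarrow> Poly_Mapping.keys (mon n w a b c :: Bidx \<Rightarrow>\<^sub>0 'k::field) \<subseteq> valid n"
  unfolding mon_def by (intro keys_sum_subset) (simp add: valid_def)

lemma keys_bprod:
  assumes "0 < n"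
  shows "Poly_Mapping.keys (bprod n w \<gamma> u v) \<subseteq> valid n"
  using order_trans[OF keys_cmul keys_mon[OF assms]] by (cases u, cases v) (simp add: bprod_def)

lemma keys_tmul:
  assumes "0 < n"
  shows "Poly_Mapping.keys (tmul n w \<gamma> p q) \<subseteq> valid n \<times> valid n"
proof -
  have "Poly_Mapping.keys ((\<lambda>(u1, u2) (v1, v2). tens (bprod n w \<gamma> u1 v1) (bprod n w \<gamma> u2 v2)) u v)
      \<subseteq> valid n \<times> valid n" for u v
    using order_trans[OF keys_tens Sigma_mono[OF keys_bprod[OF assms] keys_bprod[OF assms]]]
    by (cases u, cases v) simp
  then show ?thesis unfolding tmul_def by (intro order_trans[OF keys_lin2]) blast
qed

lemma keys_Delta: "0 < n \<Longrightarrow> Poly_Mapping.keys (Delta n w \<gamma> u) \<subseteq> valid n \<times> valid n"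
  by (simp add: Delta_def keys_tmul split: prod.splits)

lemma single_Hset: "u \<in> valid n \<Longrightarrow> Poly_Mapping.single u 1 \<in> Hset n"
  by (simp add: Hset_def)

lemma hmul_single:
  "hmul n w \<gamma> (Poly_Mapping.single u 1) (Poly_Mapping.single v 1) = bprod n w \<gamma> u v"
  by (simp add: hmul_def)

lemma bprod_x_left:
  "b < n \<Longrightarrow> c < n \<Longrightarrow>
    bprod n w \<gamma> (a, 0, 0) (a', b, c) = Poly_Mapping.single (a + a', b, c) 1"
  by (simp add: bprod_def mon_single)

lemma bprod_x_right:
  "b < n \<Longrightarrow> c < n \<Longrightarrow>
    bprod n w \<gamma> (a', b, c) (a, 0, 0) = Poly_Mapping.single (a' + a, b, c) 1"
  by (simp add: bprod_def mon_single)

lemma Delta_x: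
  "0 < n \<Longrightarrow> Delta n w \<gamma> (a, 0, 0) = Poly_Mapping.single ((a, 0, 0), (a, 0, 0)) (1::'k::field)"
  by (simp add: Delta_def oneH_def mon_single tmul_def bprod_x_left)

lemma DeltaH_single: "DeltaH n w \<gamma> (Poly_Mapping.single u 1) = Delta n w \<gamma> u"
  by (simp add: DeltaH_def)

lemma antipode_x:
  "0 < n \<Longrightarrow> antipode n w \<gamma> (a, 0, 0) = Poly_Mapping.single (- a, 0, 0) (1::'k::field)"
  by (simp add: antipode_def oneH_def mon_single hmul_single bprod_x_left)

section \<open>Yetter-Drinfeld modules over B(n, w, \<gamma>)\<close>

locale yd_module =
  fixes n w :: nat and \<gamma> :: "'k::field"
    and scale :: "'k \<Rightarrow> 'v::ab_group_add \<Rightarrow> 'v" (infixr \<open>*s\<close> 75)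
    and actb :: "Bidx \<Rightarrow> 'v \<Rightarrow> 'v" and coact :: "'v \<Rightarrow> Bidx \<Rightarrow> 'v"
  assumes YD: "YD_module n w \<gamma> scale actb coact" and n_pos: "0 < n"
begin

sublocale vector_space scale
  using YD by (simp add: YD_module_def del: split_paired_All)

sublocale vector_space_pair scale scale ..

lemma linear_actb: "u \<in> valid n \<Longrightarrow> Vector_Spaces.linear scale scale (actb u)"
  using YD by (simp add: YD_module_def del: split_paired_All)

lemma act_oneH: "act scale actb oneH v = v"
  using YD by (simp add: YD_module_def del: split_paired_All)

lemma act_hmul: "h \<in> Hset n \<Longrightarrow> h' \<in> Hset n \<Longrightarrow>
    act scale actb (hmul n w \<gamma> h h') v = act scale actb h (act scale actb h' v)"
  using YD by (simp add: YD_module_def del: split_paired_All)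

lemma finite_csupp: "finite (csupp coact v)"
  using YD by (simp add: YD_module_def del: split_paired_All)

lemma csupp_valid: "csupp coact v \<subseteq> valid n"
  using YD by (simp add: YD_module_def del: split_paired_All)

lemma linear_coact: "Vector_Spaces.linear scale scale (\<lambda>v. coact v u)"
  using YD by (simp add: YD_module_def del: split_paired_All)

lemma coact_counit: "(\<Sum>u\<in>csupp coact v. eps u *s coact v u) = v"
  using YD by (simp add: YD_module_def del: split_paired_All)

lemma coact_coassoc:
  "coact (coact v u1) u2 =
    (\<Sum>u\<in>csupp coact v. Poly_Mapping.lookup (Delta n w \<gamma> u) (u1, u2) *s coact v u)"
  using YD by (simp add: YD_module_def del: split_paired_All)

lemma coact_act: "h \<in> Hset n \<Longrightarrow> coact (act scale actb h v) s =
  (\<Sum>(p, q)\<in>Poly_Mapping.keys (DeltaH n w \<gamma> h). \<Sum>(p1, p2)\<in>Poly_Mapping.keys (Delta n w \<gamma> p).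
    \<Sum>t\<in>csupp coact v.
      (Poly_Mapping.lookup (DeltaH n w \<gamma> h) (p, q) * Poly_Mapping.lookup (Delta n w \<gamma> p) (p1, p2)
        * Poly_Mapping.lookup (hmul n w \<gamma> (hmul n w \<gamma> (Poly_Mapping.single p1 1) (Poly_Mapping.single t 1))
            (antipode n w \<gamma> q)) s)
      *s actb p2 (coact v t))"
  using YD by (simp add: YD_module_def del: split_paired_All)

lemma act_single [simp]: "act scale actb (Poly_Mapping.single u 1) v = actb u v"
  by (simp add: act_def)

lemma x_valid: "(a, 0, 0) \<in> valid n"
  using n_pos by (simp add: valid_def)

lemma actb_actb:
  assumes "u \<in> valid n" "u' \<in> valid n"
  shows "actb u' (actb u v) = act scale actb (bprod n w \<gamma> u' u) v"
  using act_hmul[OF single_Hset single_Hset, OF assms(2,1)] by (simp add: hmul_single)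

lemma act_mem_span:
  assumes "Poly_Mapping.keys h \<subseteq> S"
  shows "act scale actb h v \<in> span ((\<lambda>u. actb u v) ` S)"
  unfolding act_def using assms by (intro span_sum span_scale span_base) blast

lemma linear_maps_span_into:
  assumes "Vector_Spaces.linear scale scale f" "f ` S \<subseteq> T" "subspace T" "x \<in> span S"
  shows "f x \<in> T"
  using assms span_minimal[of S "f -` T"] linear_subspace_vimage[OF assms(1,3)] by blast

sublocale x: int_action scale "\<lambda>a. actb (a, 0, 0)"
proof (intro int_action.intro int_action_axioms.intro)
  show "vector_space scale" by (rule vector_space_axioms)
  show "Vector_Spaces.linear scale scale (actb (a, 0, 0))" for a
    by (rule linear_actb[OF x_valid])
  show "actb (0, 0, 0) v = v" for v
    using act_oneH by (simp add: oneH_def)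
  show "actb (a + b, 0, 0) v = actb (a, 0, 0) (actb (b, 0, 0) v)" for a b v
    using actb_actb[OF x_valid x_valid] n_pos by (simp add: bprod_x_left)
qed

lemma actb_x_commute:
  assumes "u \<in> valid n"
  shows "actb (a, 0, 0) (actb u v) = actb u (actb (a, 0, 0) v)"
proof -
  obtain a' b c where u: "u = (a', b, c)" "b < n" "c < n"
    using assms by (cases u) (auto simp: valid_def)
  show ?thesis
    using actb_actb[OF assms x_valid] actb_actb[OF x_valid assms]
    by (simp add: u bprod_x_left bprod_x_right add.commute)
qed

lemma actb_split: "b < n \<Longrightarrow> c < n \<Longrightarrow> actb (a, b, c) v = actb (a, 0, 0) (actb (0, b, c) v)"
  using actb_actb[OF _ x_valid, of "(0, b, c)"] by (simp add: valid_def bprod_x_left)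

lemma coact_actb_x: "coact (actb (a, 0, 0) v) s = actb (a, 0, 0) (coact v s)"
proof -
  let ?X = "(a, 0::nat, 0::nat)"
  have conj: "hmul n w \<gamma> (hmul n w \<gamma> (Poly_Mapping.single ?X 1) (Poly_Mapping.single t 1))
      (antipode n w \<gamma> ?X) = Poly_Mapping.single t (1::'k)" if "t \<in> valid n" for t
    using that n_pos
    by (cases t) (simp add: valid_def hmul_single bprod_x_left bprod_x_right antipode_x)
  have "coact (actb ?X v) s = (\<Sum>t\<in>csupp coact v. Poly_Mapping.lookup (hmul n w \<gamma>
      (hmul n w \<gamma> (Poly_Mapping.single ?X 1) (Poly_Mapping.single t 1)) (antipode n w \<gamma> ?X)) s
      *s actb ?X (coact v t))"
    using coact_act[OF single_Hset[OF x_valid[of a]], where v = v and s = s]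
    by (simp add: DeltaH_single Delta_x[OF n_pos])
  also have "\<dots> = (\<Sum>t\<in>csupp coact v.
      Poly_Mapping.lookup (Poly_Mapping.single t (1::'k)) s *s actb ?X (coact v t))"
    by (intro sum.cong refl) (simp add: conj subsetD[OF csupp_valid])
  also have "\<dots> = (\<Sum>t\<in>csupp coact v. if t = s then actb ?X (coact v t) else 0)"
    by (intro sum.cong refl) (simp add: lookup_single when_def)
  also have "\<dots> = actb ?X (coact v s)"
    using finite_csupp by (simp add: csupp_def)
  finally show ?thesis .
qed

lemma YD_submodule_range:
  assumes L: "Vector_Spaces.linear scale scale L"
    and actb_L: "\<And>u x. u \<in> valid n \<Longrightarrow> actb u (L x) = L (actb u x)"
    and coact_L: "\<And>x s. coact (L x) s = L (coact x s)"
  shows "YD_submodule n scale actb coact (range L)"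
  unfolding YD_submodule_def
  using linear_subspace_image[OF L subspace_UNIV] by (auto simp: actb_L coact_L)

definition generated_submodule :: "'v \<Rightarrow> 'v set" where
  "generated_submodule v = span {actb u c | u c. u \<in> valid n \<and> c \<in> range (coact v)}"

lemma finite_range_coact: "finite (range (coact v))"
proof -
  have "range (coact v) \<subseteq> insert 0 (coact v ` csupp coact v)"
    by (auto simp: csupp_def)
  then show ?thesis using finite_csupp finite_subset by blast
qed

lemma coact_span_range_coact:
  assumes "x \<in> span (range (coact v))"
  shows "coact x s \<in> span (range (coact v))"
proof (rule linear_maps_span_into[OF linear_coact _ subspace_span assms])
  have "coact (coact v t) s \<in> span (range (coact v))" for t
    unfolding coact_coassoc by (intro span_sum span_scale span_base rangeI)
  then show "(\<lambda>x. coact x s) ` range (coact v) \<subseteq> span (range (coact v))" by blast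
qed

lemma subspace_generated_submodule: "subspace (generated_submodule v)"
  by (simp add: generated_submodule_def)

lemma actb_mem_generated_submodule:
  assumes u: "u \<in> valid n" and x: "x \<in> span (range (coact v))"
  shows "actb u x \<in> generated_submodule v"
proof (rule linear_maps_span_into[OF linear_actb[OF u] _ subspace_generated_submodule x])
  show "actb u ` range (coact v) \<subseteq> generated_submodule v"
    unfolding generated_submodule_def using u by (blast intro: span_base)
qed

lemma coact_actb_mem_span:
  assumes "u \<in> valid n"
  shows "coact (actb u c) s \<in> span {actb p (coact c t) | p t. p \<in> valid n}"
proof -
  have "actb (snd pp) (coact c t) \<in> span {actb p (coact c t) | p t. p \<in> valid n}"
    if "pp \<in> Poly_Mapping.keys (Delta n w \<gamma> p)" for pp p t
  proof -
    have "snd pp \<in> valid n"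
      using subsetD[OF keys_Delta[OF n_pos, of w \<gamma> p] that] by (simp add: mem_Times_iff)
    then show ?thesis by (blast intro: span_base)
  qed
  then show ?thesis
    unfolding coact_act[OF single_Hset[OF assms], where v = c and s = s, unfolded act_single]
      case_prod_beta
    by (intro span_sum span_scale)
qed

lemma actb_generated_submodule:
  assumes u: "u \<in> valid n" and x: "x \<in> generated_submodule v"
  shows "actb u x \<in> generated_submodule v"
proof -
  have "actb u (actb u' c) \<in> generated_submodule v"
    if u': "u' \<in> valid n" and c: "c \<in> range (coact v)" for u' c
  proof -
    have "actb u (actb u' c) \<in> span ((\<lambda>u. actb u c) ` valid n)"
      unfolding actb_actb[OF u' u] by (rule act_mem_span[OF keys_bprod[OF n_pos]])
    also have "\<dots> \<subseteq> generated_submodule v"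
      unfolding generated_submodule_def using c by (intro span_mono) blast
    finally show ?thesis .
  qed
  then have "actb u ` {actb u' c | u' c. u' \<in> valid n \<and> c \<in> range (coact v)}
      \<subseteq> generated_submodule v"
    by blast
  from linear_maps_span_into[OF linear_actb[OF u] this subspace_generated_submodule
      x[unfolded generated_submodule_def]]
  show ?thesis .
qed

lemma coact_generated_submodule:
  assumes x: "x \<in> generated_submodule v"
  shows "coact x s \<in> generated_submodule v"
proof -
  have "coact (actb u c) s \<in> generated_submodule v"
    if u: "u \<in> valid n" and c: "c \<in> range (coact v)" for u c
  proof -
    have "coact (actb u c) s \<in> span {actb p (coact c t) | p t. p \<in> valid n}"
      by (rule coact_actb_mem_span[OF u])
    also have "\<dots> \<subseteq> generated_submodule v"
      using c by (intro span_minimal subspace_generated_submodule)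
        (blast intro: actb_mem_generated_submodule coact_span_range_coact span_base)
    finally show ?thesis .
  qed
  then have "(\<lambda>x. coact x s) ` {actb u c | u c. u \<in> valid n \<and> c \<in> range (coact v)}
      \<subseteq> generated_submodule v"
    by blast
  from linear_maps_span_into[OF linear_coact this subspace_generated_submodule
      x[unfolded generated_submodule_def]]
  show ?thesis .
qed

lemma YD_submodule_generated_submodule: "YD_submodule n scale actb coact (generated_submodule v)"
  unfolding YD_submodule_def
  by (intro conjI ballI allI subspace_generated_submodule actb_generated_submodule
      coact_generated_submodule)

lemma mem_generated_submodule: "v \<in> generated_submodule v"
proof -
  have "coact v u \<in> generated_submodule v" for u
  proof -
    have "actb (0, 0, 0) (coact v u) \<in> generated_submodule v"
      by (rule actb_mem_generated_submodule[OF x_valid span_base[OF rangeI]])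
    then show ?thesis by (simp add: x.E_0)
  qed
  then have "(\<Sum>u\<in>csupp coact v. eps u *s coact v u) \<in> generated_submodule v"
    by (intro subspace_sum[OF subspace_generated_submodule] subspace_scale[OF subspace_generated_submodule])
  then show ?thesis by (simp only: coact_counit)
qed

end

locale simple_yd_module = yd_module n w \<gamma> scale actb coact
  for n w \<gamma> and scale :: "'k::field \<Rightarrow> 'v::ab_group_add \<Rightarrow> 'v" (infixr \<open>*s\<close> 75)
    and actb coact +
  assumes nontrivial: "(UNIV :: 'v set) \<noteq> {0}"
    and simple: "\<And>W. YD_submodule n scale actb coact W \<Longrightarrow> W = {0} \<or> W = UNIV"
begin

lemma generated_submodule_eq_UNIV: "v \<noteq> 0 \<Longrightarrow> generated_submodule v = UNIV"
  using simple[OF YD_submodule_generated_submodule] mem_generated_submodule by blast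

lemma finite_x_orbit_spanning_set: "\<exists>F. finite F \<and> x.orbit_span F = UNIV"
proof -
  obtain v :: 'v where "v \<noteq> 0" using nontrivial by auto
  define F where "F = (\<lambda>(b, c, y). actb (0, b, c) y) ` ({..<n} \<times> {..<n} \<times> range (coact v))"
  have "finite F" unfolding F_def using finite_range_coact by simp
  moreover have "actb u y \<in> {actb (a, 0, 0) f | a f. f \<in> F}"
    if u: "u \<in> valid n" and y: "y \<in> range (coact v)" for u y
  proof -
    obtain a b c where abc: "u = (a, b, c)" "b < n" "c < n"
      using u by (cases u) (auto simp: valid_def)
    have "actb (0, b, c) y \<in> F"
      unfolding F_def using abc y by (intro image_eqI[where x = "(b, c, y)"]) auto
    then show ?thesis using actb_split[OF abc(2,3)] abc(1) by blast
  qed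
  then have "{actb u y | u y. u \<in> valid n \<and> y \<in> range (coact v)}
      \<subseteq> {actb (a, 0, 0) f | a f. f \<in> F}"
    by blast
  then have "generated_submodule v \<subseteq> x.orbit_span F"
    unfolding generated_submodule_def x.orbit_span_def by (rule span_mono)
  ultimately show ?thesis using generated_submodule_eq_UNIV[OF \<open>v \<noteq> 0\<close>] by blast
qed

lemma x_shifts_surjective:
  assumes "\<not> (\<exists>c. \<forall>v. actb (1, 0, 0) v = c *s v)"
  shows x.shifts_surjective
  unfolding x.shifts_surjective_def
proof
  fix c
  let ?L = "\<lambda>v. actb (1, 0, 0) v - c *s v"
  have L: "Vector_Spaces.linear scale scale ?L"
    by (intro module_hom_sub x.linear_E linear_scale_self)
  obtain v where "actb (1, 0, 0) v \<noteq> c *s v" using assms by blast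
  then have "?L v \<in> range ?L" "?L v \<noteq> 0" by auto
  then have "range ?L \<noteq> {0}" by blast
  moreover have "YD_submodule n scale actb coact (range ?L)"
  proof (rule YD_submodule_range[OF L])
    show "actb u (?L x) = ?L (actb u x)" if "u \<in> valid n" for u x
      using that by (simp add: linear_diff[OF linear_actb] linear_scale[OF linear_actb] actb_x_commute)
    show "coact (?L x) s = ?L (coact x s)" for x s
      by (simp add: linear_diff[OF linear_coact] linear_scale[OF linear_coact] coact_actb_x)
  qed
  ultimately show "surj ?L" using simple by blast
qed

theorem finite_dimensional:
  assumes "alg_closed TYPE('k)"
  shows "\<exists>B. finite B \<and> span B = UNIV"
proof -
  obtain F where F: "finite F" "x.orbit_span F = UNIV"
    using finite_x_orbit_spanning_set by blast
  show ?thesis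
  proof (cases "\<exists>c. \<forall>v. actb (1, 0, 0) v = c *s v")
    case True
    then obtain c where "\<And>v. actb (1, 0, 0) v = c *s v" by blast
    then have "span F = UNIV" using x.orbit_span_subset_span_if_scalar F(2) by blast
    then show ?thesis using F(1) by blast
  next
    case False
    then have "(UNIV :: 'v set) = {0}"
      using x.finitely_generated_shifts_surjective_trivial[OF assms F x_shifts_surjective] by blast
    then show ?thesis using nontrivial by blast
  qed
qed

end

theorem proposition3p1:
  fixes n w :: nat and \<gamma> :: "'k::field_char_0"
    and scale :: "'k \<Rightarrow> 'v::ab_group_add \<Rightarrow> 'v"
    and actb :: "Bidx \<Rightarrow> 'v \<Rightarrow> 'v" and coact :: "'v \<Rightarrow> Bidx \<Rightarrow> 'v"
  assumes "alg_closed TYPE('k)"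
    and "0 < n" and "0 < w"
    and "\<gamma> ^ n = 1" and "\<forall>m. 0 < m \<and> m < n \<longrightarrow> \<gamma> ^ m \<noteq> 1"
    and "simple_YD n w \<gamma> scale actb coact"
  shows "\<exists>B. finite B \<and> module.span scale B = UNIV"
proof -
  interpret simple_yd_module n w \<gamma> scale actb coact
    using assms(2,6) by unfold_locales (auto simp: simple_YD_def)
  show ?thesis by (rule finite_dimensional[OF assms(1)])
qed

end
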